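(* Let $X$ be a metric space and $K$ a finite simplicial complex, realized in a simplex in some $\mathbb{R}^N$ and equipped with the induced metric. Then every uniformly continuous map $f:X\to K$ is a uniform limit of Lipschitz maps $g_k:X\to K$. *)

theory Defs
  imports "HOL-Analysis.Analysis"
begin

text \<open>A finite geometric simplicial complex realized in a simplex of a Euclidean space:
  the vertex set V is a finite affinely independent set (the vertices of the ambient simplex
  are V, or V is a subset of them), and the simplices form an abstract simplicial complex
  on V (nonempty subsets of V, closed under passing to nonempty faces).\<close>

definition simplicial_complex_in_simplex :: "'b::euclidean_space set \<Rightarrow> 'b set set \<Rightarrow> bool" where
  "simplicial_complex_in_simplex V S \<longleftrightarrow>
     finite V \<and> \<not> affine_dependent V \<and>
     (\<forall>s\<in>S. s \<noteq> {} \<and> s \<subseteq> V) \<and>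
     (\<forall>s\<in>S. \<forall>t. t \<noteq> {} \<and> t \<subseteq> s \<longrightarrow> t \<in> S)"

definition realization :: "'b::euclidean_space set set \<Rightarrow> 'b set" where
  "realization S = \<Union> ((\<lambda>s. convex hull s) ` S)"

end

theory Submission
  imports Defs
begin

(*
  Since the vertex set V is affinely independent, every vertex v has an affine
  barycentric coordinate function lam v, and a point p of K is the convex combination
  p = (SUM v:V. lam v p *R v) whose nonzero coefficients lie in one simplex of K.
  For a uniformly continuous f : X -> K each coordinate lam v o f is a bounded uniformly
  continuous real function, hence uniformly approximable by Lipschitz functions
  (inf-convolution / McShane).  Shifting the approximants down and truncating at 0 yields
  Lipschitz weights w v with 0 <= w v <= lam v o f and lam v o f - 2 eta <= w v; thus the
  support of the weights stays inside the carrier simplex of f x, and their sum stays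
  close to 1.  Normalizing the weights gives a Lipschitz map g with values in K that is
  eps-close to f.
*)

section \<open>Closure properties of Lipschitz maps\<close>

lemma lipschitz_on_sum:
  fixes f :: "'i \<Rightarrow> 'a::metric_space \<Rightarrow> 'b::real_normed_vector"
  assumes "finite I" "\<forall>i\<in>I. \<exists>C. C-lipschitz_on X (f i)"
  shows "\<exists>C. C-lipschitz_on X (\<lambda>x. \<Sum>i\<in>I. f i x)"
  using assms
proof (induction I rule: finite_induct)
  case empty then show ?case using lipschitz_on_constant by auto
next
  case (insert a F)
  then obtain C D where "C-lipschitz_on X (f a)" "D-lipschitz_on X (\<lambda>x. \<Sum>i\<in>F. f i x)" by auto
  then show ?case using insert lipschitz_on_add by fastforce
qed

lemma lipschitz_on_scaleR_vector:
  fixes r :: "'a::metric_space \<Rightarrow> real" and v :: "'b::real_normed_vector"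
  assumes "C-lipschitz_on X r"
  shows "(C * norm v)-lipschitz_on X (\<lambda>x. r x *\<^sub>R v)"
proof (rule lipschitz_onI)
  fix x y assume "x \<in> X" "y \<in> X"
  then have "\<bar>r x - r y\<bar> \<le> C * dist x y" using lipschitz_onD[OF assms] by (simp add: dist_real_def)
  then have "\<bar>r x - r y\<bar> * norm v \<le> C * dist x y * norm v" by (simp add: mult_right_mono)
  then show "dist (r x *\<^sub>R v) (r y *\<^sub>R v) \<le> C * norm v * dist x y"
    by (simp add: dist_norm scaleR_diff_left[symmetric] mult_ac)
qed (use lipschitz_on_nonneg[OF assms] in simp)

lemma lipschitz_on_max_zero:
  fixes r :: "'a::metric_space \<Rightarrow> real"
  assumes "C-lipschitz_on X r"
  shows "C-lipschitz_on X (\<lambda>x. max 0 (r x))"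
proof (rule lipschitz_onI)
  fix x y assume "x \<in> X" "y \<in> X"
  then have "\<bar>r x - r y\<bar> \<le> C * dist x y" using lipschitz_onD[OF assms] by (simp add: dist_real_def)
  then show "dist (max 0 (r x)) (max 0 (r y)) \<le> C * dist x y" by (simp add: dist_real_def)
qed (use lipschitz_on_nonneg[OF assms] in simp)

lemma lipschitz_on_divide:
  fixes u W :: "'a::metric_space \<Rightarrow> real"
  assumes u: "A-lipschitz_on X u" and W: "D-lipschitz_on X W"
    and bound: "\<forall>x\<in>X. \<bar>u x\<bar> \<le> M" and away: "\<forall>x\<in>X. W x \<ge> c" and c: "c > 0"
  shows "(A / c + \<bar>M\<bar> * D / c^2)-lipschitz_on X (\<lambda>x. u x / W x)"
proof (rule lipschitz_onI)
  fix x y assume x: "x \<in> X" and y: "y \<in> X"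
  have Wx: "W x \<ge> c" and Wy: "W y \<ge> c" using away x y by auto
  have du: "\<bar>u x - u y\<bar> \<le> A * dist x y" using lipschitz_onD[OF u x y] by (simp add: dist_real_def)
  have dW: "\<bar>W y - W x\<bar> \<le> D * dist x y"
    using lipschitz_onD[OF W y x] by (simp add: dist_real_def dist_commute)
  have split: "u x / W x - u y / W y = (u x - u y) / W x + u y * (W y - W x) / (W x * W y)"
    using Wx Wy c by (simp add: field_simps)
  have first: "\<bar>(u x - u y) / W x\<bar> \<le> A * dist x y / c"
  proof -
    have "\<bar>(u x - u y) / W x\<bar> = \<bar>u x - u y\<bar> / W x" using Wx c by simp
    also have "\<dots> \<le> \<bar>u x - u y\<bar> / c" using Wx c by (simp add: divide_left_mono)
    also have "\<dots> \<le> A * dist x y / c" using du c by (simp add: divide_right_mono)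
    finally show ?thesis .
  qed
  have second: "\<bar>u y * (W y - W x) / (W x * W y)\<bar> \<le> \<bar>M\<bar> * (D * dist x y) / c^2"
  proof -
    have "\<bar>u y * (W y - W x) / (W x * W y)\<bar> = \<bar>u y\<bar> * \<bar>W y - W x\<bar> / (W x * W y)"
      using Wx Wy c by (simp add: abs_mult)
    also have "\<dots> \<le> \<bar>u y\<bar> * \<bar>W y - W x\<bar> / c^2"
    proof (rule divide_left_mono)
      show "c^2 \<le> W x * W y" using Wx Wy c by (simp add: power2_eq_square mult_mono)
      show "0 < W x * W y * c^2" using Wx Wy c by (intro mult_pos_pos) auto
    qed simp
    also have "\<dots> \<le> \<bar>M\<bar> * (D * dist x y) / c^2"
      using bound y dW by (intro divide_right_mono mult_mono) auto
    finally show ?thesis .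
  qed
  have "dist (u x / W x) (u y / W y) \<le> A * dist x y / c + \<bar>M\<bar> * (D * dist x y) / c^2"
    unfolding dist_real_def split
    using first second abs_triangle_ineq[of "(u x - u y) / W x" "u y * (W y - W x) / (W x * W y)"]
    by linarith
  then show "dist (u x / W x) (u y / W y) \<le> (A / c + \<bar>M\<bar> * D / c^2) * dist x y"
    by (simp add: algebra_simps)
qed (use lipschitz_on_nonneg[OF u] lipschitz_on_nonneg[OF W] c in auto)


section \<open>Lipschitz approximation of real functions\<close>

definition inf_convolution :: "'a::metric_space set \<Rightarrow> ('a \<Rightarrow> real) \<Rightarrow> real \<Rightarrow> 'a \<Rightarrow> real" where
  "inf_convolution X h k x = Inf ((\<lambda>y. h y + k * dist x y) ` X)"

lemma inf_convolution_le:
  assumes "\<forall>y\<in>X. L \<le> h y" "k \<ge> 0" "y \<in> X"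
  shows "inf_convolution X h k x \<le> h y + k * dist x y"
proof -
  have "bdd_below ((\<lambda>y. h y + k * dist x y) ` X)"
    using assms(1,2) by (intro bdd_belowI2[of _ L]) (smt (verit) zero_le_dist mult_nonneg_nonneg)
  then show ?thesis unfolding inf_convolution_def using assms(3) by (intro cInf_lower) auto
qed

lemma inf_convolution_ge:
  assumes "X \<noteq> {}" "\<And>y. y \<in> X \<Longrightarrow> c \<le> h y + k * dist x y"
  shows "c \<le> inf_convolution X h k x"
  unfolding inf_convolution_def using assms by (intro cInf_greatest) auto

lemma inf_convolution_lipschitz:
  assumes "X \<noteq> {}" "\<forall>y\<in>X. L \<le> h y" "k \<ge> 0"
  shows "k-lipschitz_on X (inf_convolution X h k)"
proof -
  have one_sided: "inf_convolution X h k x \<le> inf_convolution X h k x' + k * dist x x'" for x x'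
  proof -
    have "inf_convolution X h k x - k * dist x x' \<le> inf_convolution X h k x'"
    proof (rule inf_convolution_ge[OF assms(1)])
      fix y assume y: "y \<in> X"
      have "k * dist x y \<le> k * dist x x' + k * dist x' y"
        using assms(3) dist_triangle[of x y x'] by (metis distrib_left mult_left_mono)
      then show "inf_convolution X h k x - k * dist x x' \<le> h y + k * dist x' y"
        using inf_convolution_le[OF assms(2,3) y, of x] by linarith
    qed
    then show ?thesis by linarith
  qed
  show ?thesis
  proof (rule lipschitz_onI)
    fix x y
    show "dist (inf_convolution X h k x) (inf_convolution X h k y) \<le> k * dist x y"
      using one_sided[of x y] one_sided[of y x] by (simp add: dist_real_def dist_commute abs_le_iff)
  qed (rule assms(3))
qed

text \<open>If \<open>h\<close> is bounded by \<open>B\<close> and varies by less than \<open>e\<close> on \<open>d\<close>-close points, then for slope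
  \<open>k\<close> with \<open>k d \<ge> 2B\<close> the inf-convolution is \<open>e\<close>-close to \<open>h\<close>: far points \<open>y\<close> cannot
  undercut \<open>h x - e\<close>, since their penalty \<open>k * dist x y\<close> exceeds the oscillation \<open>2B\<close>.\<close>

lemma inf_convolution_close:
  assumes bound: "\<forall>y\<in>X. \<bar>h y\<bar> \<le> B" and k: "k \<ge> 0" "2 * B \<le> k * d"
    and modulus: "\<forall>x\<in>X. \<forall>y\<in>X. dist y x < d \<longrightarrow> dist (h y) (h x) < e" and e: "e > 0"
    and x: "x \<in> X"
  shows "\<bar>inf_convolution X h k x - h x\<bar> \<le> e"
proof -
  have lower: "\<forall>y\<in>X. -B \<le> h y" using bound by force
  have "inf_convolution X h k x \<le> h x" using inf_convolution_le[OF lower k(1) x, of x] by simp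
  moreover have "h x - e \<le> inf_convolution X h k x"
  proof (rule inf_convolution_ge)
    fix y assume y: "y \<in> X"
    show "h x - e \<le> h y + k * dist x y"
    proof (cases "dist x y < d")
      case True
      then have "dist (h y) (h x) < e" using modulus x y by (simp add: dist_commute)
      then show ?thesis using k(1) by (simp add: dist_real_def) (smt (verit) zero_le_dist mult_nonneg_nonneg)
    next
      case False
      then have "k * d \<le> k * dist x y" using k(1) by (simp add: mult_left_mono)
      then show ?thesis using k(2) bound x y e by (smt (verit))
    qed
  qed (use x in auto)
  ultimately show ?thesis by simp
qed

lemma lipschitz_approximation_real:
  fixes h :: "'a::metric_space \<Rightarrow> real"
  assumes uc: "uniformly_continuous_on X h" and B: "\<forall>x\<in>X. \<bar>h x\<bar> \<le> B" and e: "e > 0"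
  shows "\<exists>u C. C-lipschitz_on X u \<and> (\<forall>x\<in>X. \<bar>u x - h x\<bar> \<le> e)"
proof (cases "X = {}")
  case True then show ?thesis by (auto intro: exI[of _ 0])
next
  case False
  then have B0: "0 \<le> B" using B by force
  obtain d where d: "d > 0" "\<forall>x\<in>X. \<forall>y\<in>X. dist y x < d \<longrightarrow> dist (h y) (h x) < e"
    using uc e unfolding uniformly_continuous_on_def by blast
  define k where "k = 2 * B / d"
  have k: "k \<ge> 0" "2 * B \<le> k * d" using d B0 by (simp_all add: k_def)
  have "k-lipschitz_on X (inf_convolution X h k)"
    using B by (intro inf_convolution_lipschitz[OF False _ k(1), of "-B"]) force
  moreover have "\<forall>x\<in>X. \<bar>inf_convolution X h k x - h x\<bar> \<le> e"
    using inf_convolution_close[OF B k d(2) e] by blast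
  ultimately show ?thesis by blast
qed

text \<open>It is obtained by shifting an \<open>\<eta>\<close>-approximant down by \<open>\<eta>\<close>
  and truncating at zero; the inequality \<open>w \<le> h\<close> makes the support of \<open>w\<close> lie in that of \<open>h\<close>.\<close>

lemma lipschitz_lower_approximation:
  fixes h :: "'a::metric_space \<Rightarrow> real"
  assumes uc: "uniformly_continuous_on X h" and B: "\<forall>x\<in>X. 0 \<le> h x \<and> h x \<le> B" and \<eta>: "\<eta> > 0"
  shows "\<exists>w. (\<exists>C. C-lipschitz_on X w) \<and> (\<forall>x\<in>X. 0 \<le> w x \<and> w x \<le> h x \<and> h x - 2*\<eta> \<le> w x)"
proof -
  obtain u C where u: "C-lipschitz_on X u" "\<forall>x\<in>X. \<bar>u x - h x\<bar> \<le> \<eta>"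
    using lipschitz_approximation_real[OF uc _ \<eta>, of B] B by fastforce
  have "C-lipschitz_on X (\<lambda>x. max 0 (u x - \<eta>))"
    using lipschitz_on_max_zero[OF lipschitz_on_diff[OF u(1) lipschitz_on_constant]] by simp
  moreover have "\<forall>x\<in>X. 0 \<le> max 0 (u x - \<eta>) \<and> max 0 (u x - \<eta>) \<le> h x \<and> h x - 2*\<eta> \<le> max 0 (u x - \<eta>)"
    using u(2) B by fastforce
  ultimately show ?thesis by blast
qed


section \<open>Barycentric coordinates on the complex\<close>

definition barycentric_coordinates :: "'b::real_vector set \<Rightarrow> ('b \<Rightarrow> 'b \<Rightarrow> real) \<Rightarrow> bool" where
  "barycentric_coordinates V lam \<longleftrightarrow>
     (\<forall>v\<in>V. (\<exists>c l. linear l \<and> lam v = (\<lambda>p. c + l p)) \<and> (\<forall>w\<in>V. lam v w = (if w = v then 1 else 0)))"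

text \<open>For an affinely independent set, the translated set \<open>V - v\<close> is linearly independent, so a
  linear functional equal to \<open>-1\<close> on it exists; adding 1 gives the coordinate function of \<open>v\<close>.\<close>

lemma affine_coordinate_function:
  fixes V :: "'b::euclidean_space set"
  assumes "\<not> affine_dependent V" "v \<in> V"
  shows "\<exists>c l. linear l \<and> (\<forall>w\<in>V. c + l w = (if w = v then 1 else (0::real)))"
proof -
  have V: "V = insert v (V - {v})" using assms by auto
  have "\<not> dependent ((\<lambda>x. -v + x) ` (V - {v}))"
    using assms(1) affine_dependent_iff_dependent[of v "V - {v}"] V by auto
  then obtain l :: "'b \<Rightarrow> real" where l: "linear l" "\<forall>x\<in>(\<lambda>x. -v + x) ` (V - {v}). l x = -1"
    using linear_independent_extend[of "(\<lambda>x. -v + x) ` (V - {v})" "\<lambda>_. -1"] by blast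
  have "(1 - l v) + l w = (if w = v then 1 else 0)" if w: "w \<in> V" for w
  proof (cases "w = v")
    case False
    then have "l (-v + w) = -1" using l(2) w by auto
    then show ?thesis using False linear_diff[OF l(1), of w v] by simp
  qed simp
  then show ?thesis using l(1) by blast
qed

lemma barycentric_coordinates_exist:
  fixes V :: "'b::euclidean_space set"
  assumes "\<not> affine_dependent V"
  shows "\<exists>lam. barycentric_coordinates V lam"
proof -
  have "\<forall>v\<in>V. \<exists>a. linear (snd a) \<and> (\<forall>w\<in>V. fst a + snd a w = (if w = v then 1 else (0::real)))"
    using affine_coordinate_function[OF assms] by fastforce
  then obtain a where a: "\<And>v. v \<in> V \<Longrightarrow>
      linear (snd (a v)) \<and> (\<forall>w\<in>V. fst (a v) + snd (a v) w = (if w = v then 1 else (0::real)))"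
    by metis
  have "barycentric_coordinates V (\<lambda>v p. fst (a v) + snd (a v) p)"
    unfolding barycentric_coordinates_def using a by blast
  then show ?thesis by blast
qed

lemma barycentric_coordinate_lipschitz:
  fixes V :: "'b::euclidean_space set"
  assumes "barycentric_coordinates V lam" "v \<in> V"
  shows "\<exists>C. C-lipschitz_on UNIV (lam v)"
proof -
  obtain c l where l: "linear l" "lam v = (\<lambda>p. c + l p)"
    using assms unfolding barycentric_coordinates_def by blast
  then have "bounded_linear l" using linear_conv_bounded_linear by blast
  then obtain B where "B-lipschitz_on UNIV l" by (rule bounded_linear.lipschitz_boundE)
  then have "(0+B)-lipschitz_on UNIV (\<lambda>p. c + l p)"
    by (intro lipschitz_on_add lipschitz_on_constant)
  then show ?thesis using l(2) by auto
qed

lemma barycentric_coordinate_combination: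
  assumes bc: "barycentric_coordinates V lam" and v: "v \<in> V"
    and s: "s \<subseteq> V" "finite s" and \<mu>: "sum \<mu> s = 1"
  shows "lam v (\<Sum>w\<in>s. \<mu> w *\<^sub>R w) = (if v \<in> s then \<mu> v else 0)"
proof -
  obtain c l where l: "linear l" "lam v = (\<lambda>p. c + l p)"
    and kron: "\<forall>w\<in>V. lam v w = (if w = v then 1 else 0)"
    using bc v unfolding barycentric_coordinates_def by blast
  have "lam v (\<Sum>w\<in>s. \<mu> w *\<^sub>R w) = sum \<mu> s * c + (\<Sum>w\<in>s. \<mu> w * l w)"
    by (simp add: l \<mu> linear_sum[OF l(1)] linear_scale[OF l(1)])
  also have "\<dots> = (\<Sum>w\<in>s. \<mu> w * lam v w)"
    by (simp add: l distrib_left sum.distrib sum_distrib_right)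
  also have "\<dots> = (\<Sum>w\<in>s. if w = v then \<mu> w else 0)"
    using s kron by (intro sum.cong) auto
  also have "\<dots> = (if v \<in> s then \<mu> v else 0)" using s(2) by (simp add: sum.delta')
  finally show ?thesis .
qed

lemma realization_barycentric:
  assumes sc: "simplicial_complex_in_simplex V S" and bc: "barycentric_coordinates V lam"
    and p: "p \<in> realization S"
  shows "\<exists>s\<in>S. (\<forall>v\<in>V. 0 \<le> lam v p \<and> (lam v p \<noteq> 0 \<longrightarrow> v \<in> s))
           \<and> (\<Sum>v\<in>V. lam v p) = 1 \<and> p = (\<Sum>v\<in>V. lam v p *\<^sub>R v)"
proof -
  obtain s where s: "s \<in> S" "p \<in> convex hull s" using p unfolding realization_def by blast
  have finV: "finite V" and sV: "s \<subseteq> V" using sc s(1) by (auto simp: simplicial_complex_in_simplex_def)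
  have fins: "finite s" using sV finV finite_subset by blast
  obtain \<mu> where \<mu>: "\<forall>x\<in>s. 0 \<le> \<mu> x" "sum \<mu> s = 1" "(\<Sum>x\<in>s. \<mu> x *\<^sub>R x) = p"
    using s(2) convex_hull_finite[OF fins] by auto
  have coord: "lam v p = (if v \<in> s then \<mu> v else 0)" if "v \<in> V" for v
    using barycentric_coordinate_combination[OF bc that sV fins \<mu>(2)] \<mu>(3) by simp
  have Vs: "V \<inter> s = s" using sV by auto
  have "(\<Sum>v\<in>V. lam v p) = sum \<mu> s"
    using finV coord sum.inter_restrict[of V \<mu> s] Vs by (simp cong: sum.cong)
  moreover have "(\<Sum>v\<in>V. lam v p *\<^sub>R v) = (\<Sum>v\<in>V. if v \<in> s then \<mu> v *\<^sub>R v else 0)"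
    using coord by (intro sum.cong) auto
  then have "(\<Sum>v\<in>V. lam v p *\<^sub>R v) = (\<Sum>v\<in>s. \<mu> v *\<^sub>R v)"
    using finV sum.inter_restrict[of V "\<lambda>v. \<mu> v *\<^sub>R v" s] Vs by simp
  ultimately show ?thesis using s(1) \<mu> coord by (intro bexI[of _ s]) auto
qed


section \<open>Normalizing approximate coordinates\<close>

lemma normalized_weights_in_realization:
  assumes sc: "simplicial_complex_in_simplex V S" and s: "s \<in> S"
    and a: "\<forall>v\<in>V. 0 \<le> a v \<and> (a v \<noteq> 0 \<longrightarrow> v \<in> s)" and pos: "(\<Sum>v\<in>V. a v) > 0"
  shows "(\<Sum>v\<in>V. (a v / (\<Sum>w\<in>V. a w)) *\<^sub>R v) \<in> realization S"
proof -
  have finV: "finite V" and sV: "s \<subseteq> V" using sc s by (auto simp: simplicial_complex_in_simplex_def)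
  have fins: "finite s" using sV finV finite_subset by blast
  define A where "A = (\<Sum>v\<in>V. a v)"
  have A: "A = (\<Sum>v\<in>s. a v)" unfolding A_def using a sV finV by (intro sum.mono_neutral_right) auto
  have combination: "(\<Sum>v\<in>V. (a v / A) *\<^sub>R v) = (\<Sum>v\<in>s. (a v / A) *\<^sub>R v)"
    using a sV finV by (intro sum.mono_neutral_right) auto
  have "(\<Sum>v\<in>s. a v / A) = 1" using A pos by (simp add: A_def sum_divide_distrib[symmetric])
  then have "(\<Sum>v\<in>V. (a v / A) *\<^sub>R v) \<in> convex hull s"
    unfolding convex_hull_finite[OF fins] combination using a sV pos
    by (intro CollectI exI[of _ "\<lambda>v. a v / A"]) (auto simp: A_def)
  then show ?thesis using s unfolding realization_def A_def by blast
qed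

lemma weight_sum_bounds:
  fixes t a :: "'v \<Rightarrow> real" and \<eta> :: real
  assumes "finite V" "(\<Sum>v\<in>V. t v) = 1" "\<forall>v\<in>V. a v \<le> t v \<and> t v - 2*\<eta> \<le> a v"
  shows "1 - 2 * real (card V) * \<eta> \<le> (\<Sum>v\<in>V. a v) \<and> (\<Sum>v\<in>V. a v) \<le> 1"
proof -
  have "(\<Sum>v\<in>V. t v - 2*\<eta>) \<le> (\<Sum>v\<in>V. a v)" "(\<Sum>v\<in>V. a v) \<le> (\<Sum>v\<in>V. t v)"
    using assms(3) by (auto intro: sum_mono)
  then show ?thesis using assms(2) by (simp add: sum_subtractf)
qed

lemma normalized_weight_error:
  fixes a t W \<eta> n :: real
  assumes a: "0 \<le> a" "a \<le> t" "t - 2*\<eta> \<le> a" "a \<le> 1"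
    and W: "1 - 2*n*\<eta> \<le> W" "W \<le> 1" and small: "4*n*\<eta> \<le> 1" and n: "1 \<le> n" and \<eta>: "0 \<le> \<eta>"
  shows "\<bar>a / W - t\<bar> \<le> 6*n*\<eta>"
proof -
  have Wh: "W \<ge> 1/2" using W(1) small by linarith
  have up: "a \<le> a / W" using a Wh W(2) by (simp add: le_divide_eq mult_left_le)
  have "a \<le> (a + 4*n*\<eta>) * W"
  proof -
    have "a * (1 - W) \<le> 1 - W" using a W by (simp add: mult_left_le_one_le)
    moreover have "4*n*\<eta> * (1/2) \<le> 4*n*\<eta> * W" using Wh n \<eta> by (intro mult_left_mono) auto
    ultimately show ?thesis using W(1) by (simp add: algebra_simps)
  qed
  then have down: "a / W \<le> a + 4*n*\<eta>" using Wh by (simp add: divide_le_eq)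
  have "\<eta> \<le> n * \<eta>" using n \<eta> by (simp add: mult_le_cancel_right1)
  then show ?thesis unfolding abs_le_iff using a up down by linarith
qed

lemma normalized_combination_error:
  fixes V :: "'b::real_normed_vector set" and t a :: "'b \<Rightarrow> real" and \<eta> :: real
  assumes finV: "finite V" and t: "(\<Sum>v\<in>V. t v) = 1"
    and a: "\<forall>v\<in>V. 0 \<le> a v \<and> a v \<le> t v \<and> t v - 2*\<eta> \<le> a v"
    and small: "4 * real (card V) * \<eta> \<le> 1" and \<eta>: "0 \<le> \<eta>"
  shows "norm ((\<Sum>v\<in>V. (a v / (\<Sum>w\<in>V. a w)) *\<^sub>R v) - (\<Sum>v\<in>V. t v *\<^sub>R v))
           \<le> 6 * real (card V) * \<eta> * (\<Sum>v\<in>V. norm v)"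
proof -
  define A where "A = (\<Sum>w\<in>V. a w)"
  have A: "1 - 2 * real (card V) * \<eta> \<le> A" "A \<le> 1"
    using weight_sum_bounds[OF finV t] a by (auto simp: A_def)
  have "V \<noteq> {}" using t by auto
  then have n: "1 \<le> real (card V)" using finV by (simp add: Suc_le_eq card_gt_0_iff)
  have t1: "t v \<le> 1" if "v \<in> V" for v
  proof -
    have "t v \<le> (\<Sum>v\<in>V. t v)" by (rule member_le_sum) (use a that finV in force)+
    then show ?thesis using t by simp
  qed
  have coef: "\<bar>a v / A - t v\<bar> \<le> 6 * real (card V) * \<eta>" if v: "v \<in> V" for v
    using a v t1[OF v] by (intro normalized_weight_error[OF _ _ _ _ A small n \<eta>]) auto
  have "norm ((\<Sum>v\<in>V. (a v / A) *\<^sub>R v) - (\<Sum>v\<in>V. t v *\<^sub>R v))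
      = norm (\<Sum>v\<in>V. (a v / A - t v) *\<^sub>R v)"
    by (simp add: sum_subtractf[symmetric] scaleR_diff_left)
  also have "\<dots> \<le> (\<Sum>v\<in>V. norm ((a v / A - t v) *\<^sub>R v))" by (rule norm_sum)
  also have "\<dots> \<le> (\<Sum>v\<in>V. 6 * real (card V) * \<eta> * norm v)"
    using coef by (intro sum_mono) (simp add: mult_right_mono)
  finally show ?thesis by (simp add: A_def sum_distrib_left)
qed

lemma lipschitz_normalized_combination:
  fixes V :: "'b::real_normed_vector set" and w :: "'b \<Rightarrow> 'a::metric_space \<Rightarrow> real"
  assumes finV: "finite V" and lip: "\<forall>v\<in>V. \<exists>C. C-lipschitz_on X (w v)"
    and bounds: "\<forall>v\<in>V. \<forall>x\<in>X. \<bar>w v x\<bar> \<le> 1"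
    and away: "\<forall>x\<in>X. c \<le> (\<Sum>u\<in>V. w u x)" and c: "c > 0"
  shows "\<exists>C. C-lipschitz_on X (\<lambda>x. \<Sum>v\<in>V. (w v x / (\<Sum>u\<in>V. w u x)) *\<^sub>R v)"
proof -
  obtain D where D: "D-lipschitz_on X (\<lambda>x. \<Sum>u\<in>V. w u x)" using lipschitz_on_sum[OF finV lip] by blast
  have "\<exists>C. C-lipschitz_on X (\<lambda>x. (w v x / (\<Sum>u\<in>V. w u x)) *\<^sub>R v)" if v: "v \<in> V" for v
  proof -
    obtain A where A: "A-lipschitz_on X (w v)" using lip v by blast
    show ?thesis
      using lipschitz_on_scaleR_vector[OF lipschitz_on_divide[OF A D _ away c, of 1]] bounds v by blast
  qed
  then show ?thesis by (rule lipschitz_on_sum[OF finV, rule_format])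
qed


section \<open>Approximation by Lipschitz maps into the complex\<close>

lemma barycentric_coordinate_bounds:
  assumes sc: "simplicial_complex_in_simplex V S" and bc: "barycentric_coordinates V lam"
    and p: "p \<in> realization S" and v: "v \<in> V"
  shows "0 \<le> lam v p \<and> lam v p \<le> 1"
proof -
  have finV: "finite V" using sc by (simp add: simplicial_complex_in_simplex_def)
  obtain s where "\<forall>v\<in>V. 0 \<le> lam v p" "(\<Sum>v\<in>V. lam v p) = 1"
    using realization_barycentric[OF sc bc p] by blast
  then show ?thesis using member_le_sum[of v V "\<lambda>v. lam v p"] finV v by fastforce
qed

lemma lipschitz_coordinate_weights:
  fixes f :: "'a::metric_space \<Rightarrow> 'b::euclidean_space"
  assumes sc: "simplicial_complex_in_simplex V S" and bc: "barycentric_coordinates V lam"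
    and fX: "f ` X \<subseteq> realization S" and uc: "uniformly_continuous_on X f" and \<eta>: "\<eta> > 0"
  shows "\<exists>w. \<forall>v\<in>V. (\<exists>C. C-lipschitz_on X (w v))
           \<and> (\<forall>x\<in>X. 0 \<le> w v x \<and> w v x \<le> lam v (f x) \<and> lam v (f x) - 2*\<eta> \<le> w v x)"
proof (rule bchoice, rule ballI)
  fix v assume v: "v \<in> V"
  obtain C where "C-lipschitz_on UNIV (lam v)" using barycentric_coordinate_lipschitz[OF bc v] by blast
  then have "uniformly_continuous_on (f ` X) (lam v)"
    by (intro lipschitz_on_uniformly_continuous) (auto elim: lipschitz_on_subset)
  then have "uniformly_continuous_on X (\<lambda>x. lam v (f x))"
    using uniformly_continuous_on_compose[OF uc] by (simp add: o_def)
  moreover have "\<forall>x\<in>X. 0 \<le> lam v (f x) \<and> lam v (f x) \<le> 1"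
    using barycentric_coordinate_bounds[OF sc bc _ v] fX by blast
  ultimately show "\<exists>w. (\<exists>C. C-lipschitz_on X w)
      \<and> (\<forall>x\<in>X. 0 \<le> w x \<and> w x \<le> lam v (f x) \<and> lam v (f x) - 2*\<eta> \<le> w x)"
    by (rule lipschitz_lower_approximation[OF _ _ \<eta>])
qed

text \<open>Choice of the approximation parameter \<open>\<eta>\<close>: small enough for the total weight to stay
  above \<open>1/2\<close> and for the final error \<open>6n\<eta>M\<close> to be at most \<open>\<epsilon>\<close>.\<close>

lemma approximation_parameter:
  fixes n M \<epsilon> :: real
  assumes n: "n \<ge> 0" and M: "M \<ge> 0" and \<epsilon>: "\<epsilon> > 0"
  shows "\<exists>\<eta>>0. 4 * n * \<eta> \<le> 1 \<and> 6 * n * \<eta> * M \<le> \<epsilon>"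
proof -
  define \<eta> where "\<eta> = min (1 / (4 * (n + 1))) (\<epsilon> / (6 * (n + 1) * (M + 1)))"
  have \<eta>0: "\<eta> > 0" using n M \<epsilon> by (simp add: \<eta>_def)
  have scale: "c * \<eta> \<le> b" if "\<eta> \<le> b / c" "0 < c" for b c
    using that by (simp add: pos_le_divide_eq mult.commute)
  have "4 * n * \<eta> \<le> 4 * (n + 1) * \<eta>" using \<eta>0 by simp
  also have "\<dots> \<le> 1" by (rule scale) (use n in \<open>simp_all add: \<eta>_def\<close>)
  finally have small: "4 * n * \<eta> \<le> 1" .
  have "n * M \<le> (n + 1) * (M + 1)" using n M by (simp add: algebra_simps)
  then have "6 * n * \<eta> * M \<le> 6 * (n + 1) * (M + 1) * \<eta>"
    using mult_right_mono[of "n * M" "(n + 1) * (M + 1)" "6 * \<eta>"] \<eta>0 by (simp add: algebra_simps)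
  also have "\<dots> \<le> \<epsilon>" by (rule scale) (use n M in \<open>simp_all add: \<eta>_def\<close>)
  finally show ?thesis using \<eta>0 small by blast
qed

lemma lipschitz_approximation_into_complex:
  fixes f :: "'a::metric_space \<Rightarrow> 'b::euclidean_space"
  assumes sc: "simplicial_complex_in_simplex V S" and fX: "f ` X \<subseteq> realization S"
    and uc: "uniformly_continuous_on X f" and \<epsilon>: "\<epsilon> > 0"
  shows "\<exists>g. (\<exists>C. C-lipschitz_on X g) \<and> g ` X \<subseteq> realization S \<and> (\<forall>x\<in>X. dist (g x) (f x) \<le> \<epsilon>)"
proof -
  have finV: "finite V" and indV: "\<not> affine_dependent V"
    using sc by (auto simp: simplicial_complex_in_simplex_def)
  obtain lam where bc: "barycentric_coordinates V lam"
    using barycentric_coordinates_exist[OF indV] by blast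
  have carrier: "\<exists>s\<in>S. (\<forall>v\<in>V. 0 \<le> lam v (f x) \<and> (lam v (f x) \<noteq> 0 \<longrightarrow> v \<in> s))
      \<and> (\<Sum>v\<in>V. lam v (f x)) = 1 \<and> f x = (\<Sum>v\<in>V. lam v (f x) *\<^sub>R v)" if "x \<in> X" for x
    using realization_barycentric[OF sc bc] fX that by blast
  obtain \<eta> where \<eta>: "\<eta> > 0" "4 * real (card V) * \<eta> \<le> 1"
      and accurate: "6 * real (card V) * \<eta> * (\<Sum>v\<in>V. norm v) \<le> \<epsilon>"
    using approximation_parameter[OF _ _ \<epsilon>, of "real (card V)" "\<Sum>v\<in>V. norm v"] sum_nonneg[of V norm]
    by auto
  obtain w where w_props: "\<forall>v\<in>V. (\<exists>C. C-lipschitz_on X (w v))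
      \<and> (\<forall>x\<in>X. 0 \<le> w v x \<and> w v x \<le> lam v (f x) \<and> lam v (f x) - 2*\<eta> \<le> w v x)"
    using lipschitz_coordinate_weights[OF sc bc fX uc \<eta>(1)] by blast
  then have w: "\<forall>v\<in>V. \<exists>C. C-lipschitz_on X (w v)"
    and w_bounds: "\<forall>v\<in>V. \<forall>x\<in>X. 0 \<le> w v x \<and> w v x \<le> lam v (f x) \<and> lam v (f x) - 2*\<eta> \<le> w v x"
    by blast+
  define g where "g x = (\<Sum>v\<in>V. (w v x / (\<Sum>u\<in>V. w u x)) *\<^sub>R v)" for x
  have total: "1/2 \<le> (\<Sum>u\<in>V. w u x)" if x: "x \<in> X" for x
    using weight_sum_bounds[OF finV, of "\<lambda>v. lam v (f x)" "\<lambda>v. w v x" \<eta>] carrier[OF x] w_bounds x \<eta>(2)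
    by auto
  have unit: "\<bar>w v x\<bar> \<le> 1" if "v \<in> V" "x \<in> X" for v x
  proof -
    have "lam v (f x) \<le> 1" using barycentric_coordinate_bounds[OF sc bc _ that(1)] fX that(2) by blast
    then show ?thesis using w_bounds that by fastforce
  qed
  have "\<exists>C. C-lipschitz_on X g"
    unfolding g_def using unit total by (intro lipschitz_normalized_combination[OF finV w, of "1/2"]) auto
  moreover have "g x \<in> realization S" if x: "x \<in> X" for x
    using carrier[OF x] w_bounds x total[OF x] unfolding g_def
    by (force intro: normalized_weights_in_realization[OF sc])
  moreover have "dist (g x) (f x) \<le> \<epsilon>" if x: "x \<in> X" for x
  proof -
    have f_coords: "(\<Sum>v\<in>V. lam v (f x)) = 1" "f x = (\<Sum>v\<in>V. lam v (f x) *\<^sub>R v)"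
      using carrier[OF x] by blast+
    have "dist (g x) (f x) = norm (g x - (\<Sum>v\<in>V. lam v (f x) *\<^sub>R v))"
      unfolding dist_norm using f_coords(2) by metis
    also have "\<dots> \<le> 6 * real (card V) * \<eta> * (\<Sum>v\<in>V. norm v)"
      unfolding g_def
      by (rule normalized_combination_error[OF finV f_coords(1)]) (use w_bounds x \<eta> in auto)
    also note accurate
    finally show ?thesis .
  qed
  ultimately show ?thesis by blast
qed

lemma uniform_limit_of_error_bound:
  assumes "\<And>k x. x \<in> X \<Longrightarrow> dist (g k x) (f x) \<le> 1 / (real k + 1)"
  shows "uniform_limit X g f sequentially"
  unfolding uniform_limit_sequentially_iff
proof (intro allI impI)
  fix e :: real assume e: "e > 0"
  obtain N :: nat where N: "inverse (real (Suc N)) < e" using reals_Archimedean[OF e] by blast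
  have "dist (g n x) (f x) < e" if "N \<le> n" "x \<in> X" for n x
  proof -
    have "dist (g n x) (f x) \<le> 1 / (real n + 1)" using assms that(2) .
    also have "\<dots> \<le> 1 / (real N + 1)" using that(1) by (simp add: frac_le)
    also have "\<dots> < e" using N by (simp add: inverse_eq_divide add.commute)
    finally show ?thesis .
  qed
  then show "\<exists>N. \<forall>n\<ge>N. \<forall>x\<in>X. dist (g n x) (f x) < e" by blast
qed


theorem corollary3p7:
  fixes X :: "'a::metric_space set"
    and V :: "'b::euclidean_space set"
    and S :: "'b set set"
    and f :: "'a \<Rightarrow> 'b"
  assumes "simplicial_complex_in_simplex V S"
    and "f ` X \<subseteq> realization S"
    and "uniformly_continuous_on X f"
  shows "\<exists>g :: nat \<Rightarrow> 'a \<Rightarrow> 'b.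
           (\<forall>k. (\<exists>C. lipschitz_on C X (g k)) \<and> g k ` X \<subseteq> realization S) \<and>
           uniform_limit X g f sequentially"
proof -
  have "\<forall>k::nat. \<exists>h. (\<exists>C. C-lipschitz_on X h) \<and> h ` X \<subseteq> realization S \<and>
          (\<forall>x\<in>X. dist (h x) (f x) \<le> 1 / (real k + 1))"
    using lipschitz_approximation_into_complex[OF assms] by simp
  then obtain g where g: "\<And>k. (\<exists>C. C-lipschitz_on X (g k)) \<and> g k ` X \<subseteq> realization S \<and>
          (\<forall>x\<in>X. dist (g k x) (f x) \<le> 1 / (real k + 1))"
    by metis
  then have "uniform_limit X g f sequentially" by (intro uniform_limit_of_error_bound) blast
  then show ?thesis using g by blast
qed

end
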